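(* Let $\{\mathcal{G}_i:i\in I\}$ be a sliced system. Then for each $i\in I$ there exist functions $h^-_i,h^+_i\in C(\mathbb{R},\mathbb{R}^* )$ such that $\mathcal{G}_i\subseteq(h^-_i,h^+_i)$ and $h^+_i\le h^-_j$ whenever $i<j$.
   Context: $\mathbb{R}^*=\mathbb{R}\cup\{-\infty,\infty\}$ with its usual order topology; for $f,h\in C(\mathbb{R},\mathbb{R}^* )$, $f\le h$ means $f(x)\le h(x)$ for all $x$, and $(f,h)=\{g\in C(\mathbb{R},\mathbb{R}):(\forall x)\,f(x)<g(x)<h(x)\}$. Let $(I,<)$ be a linearly ordered set and for each $i\in I$ let $\mathcal{G}_i\subseteq C(\mathbb{R},\mathbb{R})$ be nonempty. The indexed system $\{\mathcal{G}_i:i\in I\}$ is sliced if for every $i\in I$ there exist $g^-_i,g^+_i\in C(\mathbb{R},\mathbb{R}^* )$ with $\bigcup_{j<i}\mathcal{G}_j\subseteq(-\infty,g^-_i)$, $\mathcal{G}_i\subseteq(g^-_i,g^+_i)$, and $\bigcup_{j>i}\mathcal{G}_j\subseteq(g^+_i,\infty)$. *)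

theory Defs
  imports "HOL-Analysis.Analysis" "HOL-Library.Extended_Real"
begin

definition cont_ext :: "(real \<Rightarrow> ereal) \<Rightarrow> bool" where
  "cont_ext f \<longleftrightarrow> continuous_on UNIV f"

definition band :: "(real \<Rightarrow> ereal) \<Rightarrow> (real \<Rightarrow> ereal) \<Rightarrow> (real \<Rightarrow> real) set" where
  "band f h = {g. continuous_on UNIV g \<and> (\<forall>x. f x < ereal (g x) \<and> ereal (g x) < h x)}"

definition sliced :: "'i::linorder set \<Rightarrow> ('i \<Rightarrow> (real \<Rightarrow> real) set) \<Rightarrow> bool" where
  "sliced I G \<longleftrightarrow> (\<forall>i\<in>I. \<exists>gm gp. cont_ext gm \<and> cont_ext gp \<and>
      (\<Union>j\<in>{j\<in>I. j < i}. G j) \<subseteq> band (\<lambda>_. -\<infinity>) gm \<and>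
      G i \<subseteq> band gm gp \<and>
      (\<Union>j\<in>{j\<in>I. i < j}. G j) \<subseteq> band gp (\<lambda>_. \<infinity>))"

end

theory Submission
  imports Defs
begin

text \<open>
  Let (g_i^-, g_i^+) be the bands witnessing that the system is sliced and keep h_i^- = g_i^-.
  If some k \<in> I lies strictly between i < j, any g \<in> G_k separates them,
  g_i^+ < g < g_j^-, so g_i^+ \<le> g_j^- already. Hence only the immediate successor j of i,
  if it exists, can violate the required inequality; it is unique, and h_i^+ = min g_i^+ g_j^-
  still lies above G_i because G_i lies below g_j^-.
\<close>

definition immediate_successor :: "'i::linorder set \<Rightarrow> 'i \<Rightarrow> 'i \<Rightarrow> bool" where
  "immediate_successor I i s \<longleftrightarrow> s \<in> I \<and> i < s \<and> (\<forall>k\<in>I. \<not> (i < k \<and> k < s))"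

lemma immediate_successorD: "immediate_successor I i s \<Longrightarrow> s \<in> I \<and> i < s"
  by (simp add: immediate_successor_def)

lemma immediate_successor_unique:
  "immediate_successor I i s \<Longrightarrow> immediate_successor I i t \<Longrightarrow> s = t"
  unfolding immediate_successor_def by (metis neqE)

definition cap_at_successor ::
    "'i::linorder set \<Rightarrow> ('i \<Rightarrow> 'a \<Rightarrow> 'b::complete_linorder) \<Rightarrow> ('i \<Rightarrow> 'a \<Rightarrow> 'b) \<Rightarrow> 'i \<Rightarrow> 'a \<Rightarrow> 'b"
  where "cap_at_successor I lo up i x = min (up i x) (INF s \<in> {s. immediate_successor I i s}. lo s x)"

lemma cap_at_successor_cases:
  obtains "cap_at_successor I lo up i = up i"
  | s where "immediate_successor I i s" "cap_at_successor I lo up i = (\<lambda>x. min (up i x) (lo s x))"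
proof (cases "\<exists>s. immediate_successor I i s")
  case True
  then obtain s where s: "immediate_successor I i s" by blast
  then have "{s. immediate_successor I i s} = {s}"
    using immediate_successor_unique by blast
  then show ?thesis using that(2)[OF s] by (simp add: cap_at_successor_def fun_eq_iff)
next
  case False
  then show ?thesis using that(1) by (simp add: cap_at_successor_def fun_eq_iff)
qed

lemma cap_at_successor_le_up: "cap_at_successor I lo up i x \<le> up i x"
  by (simp add: cap_at_successor_def)

lemma cap_at_successor_le_lo:
  assumes between: "\<And>k. k \<in> I \<Longrightarrow> i < k \<Longrightarrow> k < j \<Longrightarrow> up i x \<le> lo j x"
    and "j \<in> I" "i < j"
  shows "cap_at_successor I lo up i x \<le> lo j x"
proof (cases "\<exists>k\<in>I. i < k \<and> k < j")
  case True
  then obtain k where "k \<in> I" "i < k" "k < j" by blast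
  have "cap_at_successor I lo up i x \<le> up i x" by (rule cap_at_successor_le_up)
  also have "\<dots> \<le> lo j x" using between \<open>k \<in> I\<close> \<open>i < k\<close> \<open>k < j\<close> .
  finally show ?thesis .
next
  case False
  then have "immediate_successor I i j"
    using assms(2,3) by (simp add: immediate_successor_def)
  then show ?thesis
    unfolding cap_at_successor_def by (intro min.coboundedI2 INF_lower) simp
qed

lemma cont_ext_cap_at_successor:
  assumes "cont_ext (up i)" "\<And>s. immediate_successor I i s \<Longrightarrow> cont_ext (lo s)"
  shows "cont_ext (cap_at_successor I lo up i)"
proof (cases rule: cap_at_successor_cases[of I lo up i])
  case (2 s)
  then show ?thesis
    using assms unfolding cont_ext_def by (simp add: continuous_on_min)
qed (use assms in simp)

lemma band_cap_at_successor:
  assumes "g \<in> band (lo i) (up i)"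
    and "\<And>s x. immediate_successor I i s \<Longrightarrow> ereal (g x) < lo s x"
  shows "g \<in> band (lo i) (cap_at_successor I lo up i)"
proof (cases rule: cap_at_successor_cases[of I lo up i])
  case 1
  then show ?thesis using assms(1) by simp
next
  case (2 s)
  then show ?thesis using assms unfolding band_def by auto
qed

lemma sliced_obtain_bounds:
  assumes "sliced I G"
  obtains lo up :: "'i::linorder \<Rightarrow> real \<Rightarrow> ereal"
  where "\<And>i. i \<in> I \<Longrightarrow> cont_ext (lo i) \<and> cont_ext (up i) \<and> G i \<subseteq> band (lo i) (up i)"
    and "\<And>i j g x. i \<in> I \<Longrightarrow> j \<in> I \<Longrightarrow> j < i \<Longrightarrow> g \<in> G j \<Longrightarrow> ereal (g x) < lo i x"
    and "\<And>i j g x. i \<in> I \<Longrightarrow> j \<in> I \<Longrightarrow> i < j \<Longrightarrow> g \<in> G j \<Longrightarrow> up i x < ereal (g x)"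
proof -
  from assms obtain lo where "\<forall>i\<in>I. \<exists>up. cont_ext (lo i) \<and> cont_ext up \<and>
      (\<Union>j\<in>{j\<in>I. j < i}. G j) \<subseteq> band (\<lambda>_. -\<infinity>) (lo i) \<and> G i \<subseteq> band (lo i) up \<and>
      (\<Union>j\<in>{j\<in>I. i < j}. G j) \<subseteq> band up (\<lambda>_. \<infinity>)"
    unfolding sliced_def by (rule bchoice[THEN exE])
  then obtain up where bounds: "\<forall>i\<in>I. cont_ext (lo i) \<and> cont_ext (up i) \<and>
      (\<Union>j\<in>{j\<in>I. j < i}. G j) \<subseteq> band (\<lambda>_. -\<infinity>) (lo i) \<and> G i \<subseteq> band (lo i) (up i) \<and>
      (\<Union>j\<in>{j\<in>I. i < j}. G j) \<subseteq> band (up i) (\<lambda>_. \<infinity>)"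
    by (rule bchoice[THEN exE])
  show thesis
  proof (rule that)
    fix i j g x assume "i \<in> I" "j \<in> I" "j < i" "g \<in> G j"
    then have "g \<in> band (\<lambda>_. -\<infinity>) (lo i)" using bounds by blast
    then show "ereal (g x) < lo i x" by (simp add: band_def)
  next
    fix i j g x assume "i \<in> I" "j \<in> I" "i < j" "g \<in> G j"
    then have "g \<in> band (up i) (\<lambda>_. \<infinity>)" using bounds by blast
    then show "up i x < ereal (g x)" by (simp add: band_def)
  next
    fix i assume "i \<in> I"
    with bounds show "cont_ext (lo i) \<and> cont_ext (up i) \<and> G i \<subseteq> band (lo i) (up i)"
      by meson
  qed
qed

theorem lemma5p3:
  fixes I :: "'i::linorder set" and G :: "'i \<Rightarrow> (real \<Rightarrow> real) set"
  assumes "\<forall>i\<in>I. G i \<noteq> {} \<and> G i \<subseteq> {g. continuous_on UNIV g}"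
    and "sliced I G"
  shows "\<exists>hm hp :: 'i \<Rightarrow> real \<Rightarrow> ereal.
           (\<forall>i\<in>I. cont_ext (hm i) \<and> cont_ext (hp i) \<and> G i \<subseteq> band (hm i) (hp i)) \<and>
           (\<forall>i\<in>I. \<forall>j\<in>I. i < j \<longrightarrow> (\<forall>x. hp i x \<le> hm j x))"
proof -
  obtain lo up
    where bands: "\<And>i. i \<in> I \<Longrightarrow> cont_ext (lo i) \<and> cont_ext (up i) \<and> G i \<subseteq> band (lo i) (up i)"
      and below: "\<And>i j g x. i \<in> I \<Longrightarrow> j \<in> I \<Longrightarrow> j < i \<Longrightarrow> g \<in> G j \<Longrightarrow> ereal (g x) < lo i x"
      and above: "\<And>i j g x. i \<in> I \<Longrightarrow> j \<in> I \<Longrightarrow> i < j \<Longrightarrow> g \<in> G j \<Longrightarrow> up i x < ereal (g x)"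
    using sliced_obtain_bounds[OF assms(2)] by blast
  have separated: "up i x \<le> lo j x"
    if "i \<in> I" "j \<in> I" "k \<in> I" "i < k" "k < j" for i j k x
  proof -
    obtain g where "g \<in> G k" using assms(1) \<open>k \<in> I\<close> by blast
    then have "up i x < ereal (g x)" "ereal (g x) < lo j x"
      using above[of i k] below[of j k] that by simp_all
    then show ?thesis by simp
  qed
  show ?thesis
  proof (intro exI conjI ballI allI impI)
    fix i assume i: "i \<in> I"
    show "cont_ext (lo i)" using bands[OF i] by simp
    show "cont_ext (cap_at_successor I lo up i)"
      by (rule cont_ext_cap_at_successor) (simp_all add: bands i immediate_successorD)
    show "G i \<subseteq> band (lo i) (cap_at_successor I lo up i)"
    proof
      fix g assume g: "g \<in> G i"
      show "g \<in> band (lo i) (cap_at_successor I lo up i)"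
      proof (rule band_cap_at_successor)
        show "g \<in> band (lo i) (up i)" using bands[OF i] g by blast
        fix s x assume "immediate_successor I i s"
        then have "s \<in> I" "i < s" by (simp_all add: immediate_successorD)
        then show "ereal (g x) < lo s x" using below[OF _ i _ g] by simp
      qed
    qed
  next
    fix i j x assume "i \<in> I" "j \<in> I" "i < j"
    then show "cap_at_successor I lo up i x \<le> lo j x"
      by (intro cap_at_successor_le_lo separated)
  qed
qed

end
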